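(* For every integer $l\ge 7$ there is no monotone search $\tilde c$-strategy (for any color assignment $\tilde c$) that cleans the tree $T_l$ using $3$ searchers.
   Context: An edge-labeled graph $G=(V(G),E(G),c)$ is a simple graph with $c\colon E(G)\to\{1,\dots,k\}$; $c(v)$ denotes the set of colors of edges incident to $v$. Edge search: a search strategy is a sequence of moves: placing a searcher on a vertex, removing a searcher from a vertex, or sliding a searcher from $u$ along an edge $\{u,v\}$ to $v$. Initially all edges are contaminated; a slide along an edge makes it clean; after every move, a clean edge $e$ becomes contaminated (recontamination) if some path with no searcher-occupied vertex joins an endpoint of $e$ to an endpoint of a contaminated edge. The strategy must end with all edges clean; it uses $k$ searchers if at most $k$ are simultaneously present. It is monotone if no recontamination occurs. In a search $\tilde c$-strategy each searcher $j$ has a fixed color $\tilde c(j)$, may be placed on $v$ only if $\tilde c(j)\in c(v)$, and may slide along $e$ only if $\tilde c(j)=c(e)$. The tree $T_l$ ($l\ge 3$), with colors $\{1,2,3\}$: For $i\in\{1,2\}$, $T'_i$ has root $q_i$ with three children joined to $q_i$ by edges of color 1, and each of these children has three children joined by edges of color 2. $T''_l$: a path $v_0,v_1,\dots,v_{l+1}$ with edges $e_x=\{v_x,v_{x+1}\}$ of color $(x \bmod 3)+1$ for $x\in\{0,\dots,l\}$; additionally, for each $x\in\{1,\dots,l\}$, attach to $v_x$ one pendant edge of color $(x\bmod 3)+1$ and one pendant edge of color $((x-1)\bmod 3)+1$. Let $P$ be a path $p_0p_1p_2p_3p_4$ with edges $\{p_0,p_1\},\{p_3,p_4\}$ of color 3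 and $\{p_1,p_2\},\{p_2,p_3\}$ of color 2. $T_l$ is obtained from disjoint copies of $T'_1,T'_2,T''_l,P$ by identifying $p_2$ with $v_0$, $p_0$ with $q_1$, and $p_4$ with $q_2$. *)

theory Defs
  imports Main
begin

text \<open>An edge-labelled graph is given by a set E of 2-element vertex sets and a
colouring c of its edges. Searchers are indexed 0,...,k-1; searcher j has colour ct j.
A configuration is a pair (positions of searchers, set of clean edges).\<close>

datatype 'v move = Place nat 'v | Remove nat | Slide nat 'v 'v

definition vcolors :: "'v set set \<Rightarrow> ('v set \<Rightarrow> nat) \<Rightarrow> 'v \<Rightarrow> nat set" where
  "vcolors E c v = {c e | e. e \<in> E \<and> v \<in> e}"

definition occupied :: "(nat \<Rightarrow> 'v option) \<Rightarrow> 'v set" where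
  "occupied pos = {v. \<exists>j. pos j = Some v}"

definition free_conn :: "'v set set \<Rightarrow> 'v set \<Rightarrow> 'v \<Rightarrow> 'v \<Rightarrow> bool" where
  "free_conn E Occ x y \<longleftrightarrow> x \<notin> Occ \<and> (\<lambda>a b. {a, b} \<in> E \<and> a \<notin> Occ \<and> b \<notin> Occ)\<^sup>*\<^sup>* x y"

definition recontaminate :: "'v set set \<Rightarrow> 'v set \<Rightarrow> 'v set set \<Rightarrow> 'v set set" where
  "recontaminate E Occ C =
     {e \<in> C. \<not> (\<exists>x\<in>e. \<exists>f\<in>E - C. \<exists>y\<in>f. free_conn E Occ x y)}"

fun legal :: "'v set set \<Rightarrow> ('v set \<Rightarrow> nat) \<Rightarrow> (nat \<Rightarrow> nat) \<Rightarrow> nat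
              \<Rightarrow> (nat \<Rightarrow> 'v option) \<Rightarrow> 'v move \<Rightarrow> bool" where
  "legal E c ct k pos (Place j v) \<longleftrightarrow> j < k \<and> pos j = None \<and> ct j \<in> vcolors E c v"
| "legal E c ct k pos (Remove j) \<longleftrightarrow> j < k \<and> pos j \<noteq> None"
| "legal E c ct k pos (Slide j u v) \<longleftrightarrow>
     j < k \<and> pos j = Some u \<and> {u, v} \<in> E \<and> c {u, v} = ct j"

fun new_pos :: "(nat \<Rightarrow> 'v option) \<Rightarrow> 'v move \<Rightarrow> (nat \<Rightarrow> 'v option)" where
  "new_pos pos (Place j v) = pos(j := Some v)"
| "new_pos pos (Remove j) = pos(j := None)"
| "new_pos pos (Slide j u v) = pos(j := Some v)"

fun slid :: "'v set set \<Rightarrow> 'v move \<Rightarrow> 'v set set" where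
  "slid C (Slide j u v) = C \<union> {{u, v}}"
| "slid C _ = C"

definition search_strategy ::
  "'v set set \<Rightarrow> ('v set \<Rightarrow> nat) \<Rightarrow> (nat \<Rightarrow> nat) \<Rightarrow> nat \<Rightarrow> nat
   \<Rightarrow> (nat \<Rightarrow> 'v move) \<Rightarrow> (nat \<Rightarrow> (nat \<Rightarrow> 'v option) \<times> 'v set set) \<Rightarrow> bool" where
  "search_strategy E c ct k n ms ss \<longleftrightarrow>
     ss 0 = (\<lambda>_. None, {}) \<and>
     (\<forall>i<n. legal E c ct k (fst (ss i)) (ms i) \<and>
            ss (Suc i) = (new_pos (fst (ss i)) (ms i),
                          recontaminate E (occupied (new_pos (fst (ss i)) (ms i)))
                                        (slid (snd (ss i)) (ms i)))) \<and>
     snd (ss n) = E"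

definition monotone_search_strategy ::
  "'v set set \<Rightarrow> ('v set \<Rightarrow> nat) \<Rightarrow> (nat \<Rightarrow> nat) \<Rightarrow> nat \<Rightarrow> nat
   \<Rightarrow> (nat \<Rightarrow> 'v move) \<Rightarrow> (nat \<Rightarrow> (nat \<Rightarrow> 'v option) \<times> 'v set set) \<Rightarrow> bool" where
  "monotone_search_strategy E c ct k n ms ss \<longleftrightarrow>
     search_strategy E c ct k n ms ss \<and>
     (\<forall>i<n. recontaminate E (occupied (new_pos (fst (ss i)) (ms i))) (slid (snd (ss i)) (ms i))
             = slid (snd (ss i)) (ms i))"

text \<open>Vertices: Q i = q_i (= p_0 for i=1, = p_4 for i=2); Ch i a children of q_i;
Gr i a b grandchildren; V x = v_x (V 0 = p_2); PA x, PB x pendant vertices at v_x;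
P1 = p_1, P3 = p_3.\<close>
datatype vert = Q nat | Ch nat nat | Gr nat nat nat | V nat | PA nat | PB nat | P1 | P3

definition T_tri :: "nat \<Rightarrow> (vert \<times> vert \<times> nat) set" where
  "T_tri l =
     {(Q i, Ch i a, 1) | i a. i \<in> {1, 2} \<and> a < 3} \<union>
     {(Ch i a, Gr i a b, 2) | i a b. i \<in> {1, 2} \<and> a < 3 \<and> b < 3} \<union>
     {(V x, V (Suc x), x mod 3 + 1) | x. x \<le> l} \<union>
     {(V x, PA x, x mod 3 + 1) | x. 1 \<le> x \<and> x \<le> l} \<union>
     {(V x, PB x, (x - 1) mod 3 + 1) | x. 1 \<le> x \<and> x \<le> l} \<union>
     {(Q 1, P1, 3), (P1, V 0, 2), (V 0, P3, 2), (P3, Q 2, 3)}"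

definition T_edges :: "nat \<Rightarrow> vert set set" where
  "T_edges l = {{u, v} | u v c. (u, v, c) \<in> T_tri l}"

definition T_col :: "nat \<Rightarrow> vert set \<Rightarrow> nat" where
  "T_col l e = (THE c. \<exists>u v. (u, v, c) \<in> T_tri l \<and> e = {u, v})"

end

theory Submission
  imports Defs
begin

text \<open>In a monotone strategy every vertex incident to both a clean and a contaminated edge
must be occupied, so a vertex of degree at least three carries two searchers around the moment the
second of three of its edges is cleaned. With three searchers, necessarily of pairwise different
colours, the third searcher then has the colour missing at that vertex and is the only guard of any
other such boundary vertex. For the children of q_i this yields a moment at which the boundary
between clean and contaminated edges lies inside T'_i; say that moment for T'_i precedes the one
for T'_j. In between, each of v_1, ..., v_7 is doubly guarded while the third searcher has to block
the path from T'_i through p_2 = v_0 to T'_j, so no other spine vertex is on the boundary and the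
moments at which v_1, ..., v_7 are doubly guarded are monotone along the spine. At v_4, ..., v_7
the third searcher has colours 3, 1, 2, 3, which it cannot use on v_0, p, q_j, a child of q_j
(outward sweep) nor on a child of q_i, q_i, p, v_0 (inward sweep); so the clean region creeps along
this path into an edge that is known to be contaminated.\<close>

section \<open>Monotone search strategies\<close>

locale monotone_search =
  fixes E :: "'v set set" and col :: "'v set \<Rightarrow> nat" and ct :: "nat \<Rightarrow> nat" and k n :: nat
    and ms :: "nat \<Rightarrow> 'v move" and ss :: "nat \<Rightarrow> (nat \<Rightarrow> 'v option) \<times> 'v set set"
  assumes monotone: "monotone_search_strategy E col ct k n ms ss"
begin

definition clean :: "nat \<Rightarrow> 'v set set" where
  "clean t = snd (ss t)"

definition pos :: "nat \<Rightarrow> nat \<Rightarrow> 'v option" where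
  "pos t = fst (ss t)"

definition mixed :: "nat \<Rightarrow> 'v \<Rightarrow> bool" where
  "mixed t v \<longleftrightarrow> (\<exists>e\<in>clean t. v \<in> e) \<and> (\<exists>f\<in>E - clean t. v \<in> f)"

definition doubly_guarded :: "nat \<Rightarrow> 'v \<Rightarrow> bool" where
  "doubly_guarded t v \<longleftrightarrow>
     t \<le> n \<and> mixed t v \<and> (\<exists>j j'. j \<noteq> j' \<and> pos t j = Some v \<and> pos t j' = Some v)"

definition cleans :: "nat \<Rightarrow> 'v set \<Rightarrow> bool" where
  "cleans s e \<longleftrightarrow> s < n \<and> e \<notin> clean s \<and> e \<in> clean (Suc s)"

lemma strategy_step:
  assumes "i < n"
  shows "legal E col ct k (pos i) (ms i)" "pos (Suc i) = new_pos (pos i) (ms i)"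
    "clean (Suc i) = slid (clean i) (ms i)"
    "recontaminate E (occupied (pos (Suc i))) (clean (Suc i)) = clean (Suc i)"
  using monotone assms unfolding monotone_search_strategy_def search_strategy_def clean_def pos_def
  by (metis fst_conv snd_conv)+

lemma clean_0: "clean 0 = {}" and pos_0: "pos 0 = (\<lambda>_. None)" and clean_final: "clean n = E"
  using monotone unfolding monotone_search_strategy_def search_strategy_def clean_def pos_def
  by auto

lemma clean_Suc_mono: "i < n \<Longrightarrow> clean i \<subseteq> clean (Suc i)"
  using strategy_step(3) by (cases "ms i") auto

lemma clean_mono: "s \<le> t \<Longrightarrow> t \<le> n \<Longrightarrow> clean s \<subseteq> clean t"
proof (induction t rule: dec_induct)
  case (step t)
  then show ?case using clean_Suc_mono[of t] by auto
qed simp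

lemma clean_subset: "t \<le> n \<Longrightarrow> clean t \<subseteq> E"
  using clean_mono[of t n] clean_final by simp

lemma cleaning_move:
  assumes "cleans s e"
  obtains j a b where "ms s = Slide j a b" "e = {a, b}" "{a, b} \<in> E" "col {a, b} = ct j" "j < k"
    "pos s j = Some a" "pos (Suc s) j = Some b" "\<And>j'. j' \<noteq> j \<Longrightarrow> pos (Suc s) j' = pos s j'"
  using assms strategy_step[of s] unfolding cleans_def by (cases "ms s") auto

lemma cleans_exists: "e \<in> E \<Longrightarrow> \<exists>s. cleans s e"
  using ex_least_nat_less[of "\<lambda>t. e \<in> clean t" n] clean_0 clean_final
  unfolding cleans_def by auto

lemma cleans_unique: "cleans s e \<Longrightarrow> cleans s f \<Longrightarrow> e = f"
  unfolding cleans_def using strategy_step(3)[of s] by (cases "ms s") auto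

lemma edge_color_carried: "e \<in> E \<Longrightarrow> \<exists>j<k. ct j = col e"
  by (metis cleans_exists cleaning_move)

lemma pos_searcher_less: "t \<le> n \<Longrightarrow> pos t j \<noteq> None \<Longrightarrow> j < k"
proof (induction t)
  case (Suc t)
  then show ?case using strategy_step[of t] by (cases "ms t") (auto split: if_splits)
qed (simp add: pos_0)

lemma pos_color: "t \<le> n \<Longrightarrow> pos t j = Some v \<Longrightarrow> ct j \<in> vcolors E col v"
proof (induction t arbitrary: v)
  case (Suc t)
  then have t: "t < n" by simp
  show ?case
  proof (cases "ms t")
    case (Slide j' a b)
    show ?thesis
    proof (cases "j = j'")
      case True
      then have "v = b" "{a, b} \<in> E" "col {a, b} = ct j"
        using strategy_step[OF t] Suc.prems Slide by auto
      then show ?thesis unfolding vcolors_def by force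
    qed (use strategy_step[OF t] Suc Slide in auto)
  qed (use strategy_step[OF t] Suc in \<open>auto split: if_splits\<close>)
qed (simp add: pos_0)

text \<open>Monotonicity forces a guard on every vertex between a clean and a contaminated edge:
an unguarded one would recontaminate the clean edge through the trivial path.\<close>
lemma mixed_guarded:
  assumes "t \<le> n" "mixed t v"
  shows "\<exists>j<k. pos t j = Some v"
proof (cases t)
  case 0
  then show ?thesis using assms(2) by (simp add: mixed_def clean_0)
next
  case (Suc i)
  obtain e f where e: "e \<in> clean t" "v \<in> e" and f: "f \<in> E - clean t" "v \<in> f"
    using assms(2) unfolding mixed_def by blast
  have "recontaminate E (occupied (pos t)) (clean t) = clean t"
    using strategy_step(4)[of i] Suc assms(1) by simp
  then have "\<not> free_conn E (occupied (pos t)) v v"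
    using e f unfolding recontaminate_def by blast
  then obtain j where "pos t j = Some v"
    unfolding free_conn_def occupied_def by auto
  then show ?thesis using pos_searcher_less assms(1) by blast
qed

lemma clean_spreads:
  "e \<in> clean t \<Longrightarrow> \<not> mixed t w \<Longrightarrow> w \<in> e \<Longrightarrow> w \<in> f \<Longrightarrow> f \<in> E \<Longrightarrow> f \<in> clean t"
  unfolding mixed_def by blast

lemma unmixed_clean_iff:
  "\<not> mixed t w \<Longrightarrow> e \<in> E \<Longrightarrow> f \<in> E \<Longrightarrow> w \<in> e \<Longrightarrow> w \<in> f \<Longrightarrow> e \<in> clean t \<longleftrightarrow> f \<in> clean t"
  unfolding mixed_def by blast

lemma clean_spreads_later:
  "e \<in> clean s \<Longrightarrow> s \<le> t \<Longrightarrow> t \<le> n \<Longrightarrow> \<not> mixed t w \<Longrightarrow> w \<in> e \<Longrightarrow> w \<in> f \<Longrightarrow> f \<in> E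
   \<Longrightarrow> f \<in> clean t"
  using clean_mono clean_spreads by blast

lemma mixed_before_iff_clean:
  assumes "s \<le> n" "t \<le> n" "mixed s v" "\<not> mixed t v" "e \<in> E" "v \<in> e"
  shows "s < t \<longleftrightarrow> e \<in> clean t"
proof
  assume "s < t"
  obtain e' where "e' \<in> clean s" "v \<in> e'" using assms(3) unfolding mixed_def by blast
  then show "e \<in> clean t"
    using clean_spreads_later \<open>s < t\<close> assms by (meson less_imp_le)
next
  assume "e \<in> clean t"
  obtain f where f: "f \<in> E - clean s" "v \<in> f" using assms(3) unfolding mixed_def by blast
  have "s \<noteq> t" using assms(3,4) by blast
  moreover have "\<not> s > t"
  proof
    assume "s > t"
    then have "f \<in> clean t" using clean_spreads[OF \<open>e \<in> clean t\<close> assms(4)] f assms(6) by blast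
    then show False using clean_mono[of t s] \<open>s > t\<close> assms(1) f by auto
  qed
  ultimately show "s < t" by simp
qed

text \<open>v is mixed just before and just after the slide that cleans e2, and this slide moves a
searcher onto or off v; so a second searcher stays on v.\<close>
lemma doubly_guarded_middle_cleaning:
  assumes simple: "\<And>a b. {a, b} \<in> E \<Longrightarrow> a \<noteq> b"
    and cl: "cleans s1 e1" "cleans s2 e2" "cleans s3 e3" and order: "s1 < s2" "s2 < s3"
    and v: "v \<in> e1" "v \<in> e2" "v \<in> e3" and E: "e1 \<in> E" "e3 \<in> E"
  shows "doubly_guarded s2 v \<or> doubly_guarded (Suc s2) v"
proof -
  have s2: "s2 < n" and s3: "s3 < n" using cl unfolding cleans_def by auto
  have "e1 \<in> clean s2" "e3 \<notin> clean (Suc s2)"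
    using cl(1,3) clean_mono[of "Suc s1" s2] clean_mono[of "Suc s2" s3] order s2 s3
    unfolding cleans_def by auto
  moreover have "clean s2 \<subseteq> clean (Suc s2)" using clean_Suc_mono[OF s2] .
  ultimately have mixed: "mixed s2 v" "mixed (Suc s2) v"
    unfolding mixed_def using v E by blast+
  obtain j a b where move: "e2 = {a, b}" "{a, b} \<in> E" "pos s2 j = Some a" "pos (Suc s2) j = Some b"
    "\<And>j'. j' \<noteq> j \<Longrightarrow> pos (Suc s2) j' = pos s2 j'"
    using cleaning_move[OF cl(2)] by metis
  have "a \<noteq> b" using simple move(2) .
  consider "v = a" | "v = b" using v(2) move(1) by blast
  then show ?thesis
  proof cases
    case 1
    obtain j' where "pos (Suc s2) j' = Some v" using mixed_guarded[OF _ mixed(2)] s2 by auto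
    moreover have "j' \<noteq> j" using calculation move(4) 1 \<open>a \<noteq> b\<close> by auto
    ultimately show ?thesis
      unfolding doubly_guarded_def using mixed(1) move(3,5) 1 s2 by (metis less_imp_le)
  next
    case 2
    obtain j' where "pos s2 j' = Some v" using mixed_guarded[OF _ mixed(1)] s2 by auto
    moreover have "j' \<noteq> j" using calculation move(3) 2 \<open>a \<noteq> b\<close> by auto
    ultimately show ?thesis
      unfolding doubly_guarded_def using mixed(2) move(4,5) 2 s2 by (metis Suc_leI)
  qed
qed

lemma doubly_guarded_at_junction:
  assumes simple: "\<And>a b. {a, b} \<in> E \<Longrightarrow> a \<noteq> b"
    and E: "e1 \<in> E" "e2 \<in> E" "e3 \<in> E" and distinct: "e1 \<noteq> e2" "e1 \<noteq> e3" "e2 \<noteq> e3"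
    and v: "v \<in> e1" "v \<in> e2" "v \<in> e3"
  shows "\<exists>t. doubly_guarded t v"
proof -
  obtain s1 s2 s3 where cl: "cleans s1 e1" "cleans s2 e2" "cleans s3 e3"
    using cleans_exists E by metis
  then have "s1 \<noteq> s2" "s1 \<noteq> s3" "s2 \<noteq> s3" using distinct cleans_unique by metis+
  then consider "s1 < s2 \<and> s2 < s3" | "s1 < s3 \<and> s3 < s2" | "s2 < s1 \<and> s1 < s3"
    | "s2 < s3 \<and> s3 < s1" | "s3 < s1 \<and> s1 < s2" | "s3 < s2 \<and> s2 < s1" by arith
  then show ?thesis
    by cases (metis doubly_guarded_middle_cleaning[OF simple] cl v E)+
qed

lemma doubly_guarded_unique:
  assumes "k \<le> 3" "doubly_guarded t v" "doubly_guarded t w"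
  shows "v = w"
proof (rule ccontr)
  assume "v \<noteq> w"
  obtain j1 j2 j3 j4 where "j1 \<noteq> j2" "pos t j1 = Some v" "pos t j2 = Some v"
    "j3 \<noteq> j4" "pos t j3 = Some w" "pos t j4 = Some w" and "t \<le> n"
    using assms(2,3) unfolding doubly_guarded_def by blast
  moreover have "j1 < k" "j2 < k" "j3 < k" "j4 < k"
    using calculation pos_searcher_less by auto
  moreover have "j1 \<noteq> j3" "j1 \<noteq> j4" "j2 \<noteq> j3" "j2 \<noteq> j4"
    using calculation \<open>v \<noteq> w\<close> by auto
  ultimately show False using \<open>k \<le> 3\<close> by arith
qed

lemma mixed_unique_besides_doubly_guarded:
  assumes "k \<le> 3" "doubly_guarded t v" "mixed t u" "mixed t w" "u \<noteq> v" "w \<noteq> v"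
  shows "u = w"
proof -
  obtain j1 j2 where "j1 \<noteq> j2" "pos t j1 = Some v" "pos t j2 = Some v" and t: "t \<le> n"
    using assms(2) unfolding doubly_guarded_def by blast
  moreover obtain ju jw where "ju < k" "pos t ju = Some u" "jw < k" "pos t jw = Some w"
    using mixed_guarded[OF t] assms(3,4) by blast
  moreover have "j1 < k" "j2 < k" using calculation pos_searcher_less by auto
  moreover have "ju \<noteq> j1" "ju \<noteq> j2" "jw \<noteq> j1" "jw \<noteq> j2"
    using calculation assms(5,6) by auto
  ultimately have "ju = jw" using assms(1) by arith
  then show ?thesis using \<open>pos t ju = Some u\<close> \<open>pos t jw = Some w\<close> by simp
qed

end

section \<open>The tree T_l\<close>

lemma T_edges_iff: "e \<in> T_edges l \<longleftrightarrow> (\<exists>u v c. (u, v, c) \<in> T_tri l \<and> e = {u, v})"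
  by (auto simp: T_edges_def)

lemma T_tri_color_unique:
  "(u, v, c) \<in> T_tri l \<Longrightarrow> (u', v', c') \<in> T_tri l \<Longrightarrow> {u, v} = {u', v'} \<Longrightarrow> c = c'"
  unfolding T_tri_def doubleton_eq_iff by auto

lemma T_col_tri: "(u, v, c) \<in> T_tri l \<Longrightarrow> T_col l {u, v} = c"
  unfolding T_col_def by (rule the_equality) (auto dest: T_tri_color_unique)

lemma T_edges_simple: "{a, b} \<in> T_edges l \<Longrightarrow> a \<noteq> b"
proof -
  have "u \<noteq> v" if "(u, v, c) \<in> T_tri l" for u v c
    using that unfolding T_tri_def by auto
  then show "{a, b} \<in> T_edges l \<Longrightarrow> a \<noteq> b"
    unfolding T_edges_iff doubleton_eq_iff by blast
qed

lemma vcolors_T_tri: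
  "c \<in> vcolors (T_edges l) (T_col l) w \<Longrightarrow> \<exists>u v. (u, v, c) \<in> T_tri l \<and> w \<in> {u, v}"
  unfolding vcolors_def T_edges_iff by (auto dest: T_col_tri)

text \<open>link i is the vertex of P between q_i and p_2 = v_0, i.e. p_1 or p_3.\<close>
definition link :: "nat \<Rightarrow> vert" where
  "link i = (if i = 1 then P1 else P3)"

definition spine_edge :: "nat \<Rightarrow> vert set" where
  "spine_edge x = {V x, V (Suc x)}"

lemma link_neq [simp]: "link i \<noteq> V x" "link i \<noteq> Q i'" "link i \<noteq> Ch i' a"
  "V x \<noteq> link i" "Q i' \<noteq> link i" "Ch i' a \<noteq> link i"
  by (auto simp: link_def)

lemma T_edge_of_tri: "(u, v, c) \<in> T_tri l \<Longrightarrow> {u, v} \<in> T_edges l"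
  by (auto simp: T_edges_def)

lemma T_edges_members:
  assumes "i \<in> {1, 2}"
  shows "a < 3 \<Longrightarrow> {Q i, Ch i a} \<in> T_edges l"
    and "a < 3 \<Longrightarrow> b < 3 \<Longrightarrow> {Ch i a, Gr i a b} \<in> T_edges l"
    and "{Q i, link i} \<in> T_edges l"
    and "{V 0, link i} \<in> T_edges l"
proof -
  show "a < 3 \<Longrightarrow> {Q i, Ch i a} \<in> T_edges l"
    by (rule T_edge_of_tri[of _ _ 1]) (use assms in \<open>auto simp: T_tri_def\<close>)
  show "a < 3 \<Longrightarrow> b < 3 \<Longrightarrow> {Ch i a, Gr i a b} \<in> T_edges l"
    by (rule T_edge_of_tri[of _ _ 2]) (use assms in \<open>auto simp: T_tri_def\<close>)
  have "{Q 1, P1} \<in> T_edges l" "{P3, Q 2} \<in> T_edges l" "{P1, V 0} \<in> T_edges l"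
    "{V 0, P3} \<in> T_edges l"
    by (rule T_edge_of_tri, auto simp: T_tri_def)+
  then show "{Q i, link i} \<in> T_edges l" "{V 0, link i} \<in> T_edges l"
    using assms unfolding link_def by (auto simp: insert_commute)
qed

lemma spine_edges_members:
  shows "x \<le> l \<Longrightarrow> spine_edge x \<in> T_edges l"
    and "1 \<le> x \<Longrightarrow> x \<le> l \<Longrightarrow> {V x, PA x} \<in> T_edges l"
  unfolding spine_edge_def by (rule T_edge_of_tri, auto simp: T_tri_def)+

lemma vcolors_Ch: "vcolors (T_edges l) (T_col l) (Ch i a) \<subseteq> {1, 2}"
  by (auto dest!: vcolors_T_tri simp: T_tri_def)

lemma vcolors_Q: "vcolors (T_edges l) (T_col l) (Q i) \<subseteq> {1, 3}"
  by (auto dest!: vcolors_T_tri simp: T_tri_def)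

lemma vcolors_link: "vcolors (T_edges l) (T_col l) (link i) \<subseteq> {2, 3}"
  by (auto dest!: vcolors_T_tri simp: T_tri_def link_def)

lemma vcolors_V0: "vcolors (T_edges l) (T_col l) (V 0) \<subseteq> {1, 2}"
  by (auto dest!: vcolors_T_tri simp: T_tri_def)

lemma vcolors_V:
  "1 \<le> x \<Longrightarrow> vcolors (T_edges l) (T_col l) (V x) \<subseteq> {x mod 3 + 1, (x - 1) mod 3 + 1}"
  by (auto dest!: vcolors_T_tri simp: T_tri_def)

section \<open>Three searchers on T_l\<close>

lemma middle_of_three:
  fixes \<tau> :: "nat \<Rightarrow> nat"
  assumes "inj_on \<tau> {..<3}"
  obtains a b c where "a < 3" "b < 3" "c < 3" "\<tau> b < \<tau> a" "\<tau> a < \<tau> c"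
proof -
  have "\<tau> 0 \<noteq> \<tau> 1" "\<tau> 0 \<noteq> \<tau> 2" "\<tau> 1 \<noteq> \<tau> 2"
    using inj_onD[OF assms] by fastforce+
  then consider "\<tau> 0 < \<tau> 1 \<and> \<tau> 1 < \<tau> 2" | "\<tau> 0 < \<tau> 2 \<and> \<tau> 2 < \<tau> 1"
    | "\<tau> 1 < \<tau> 0 \<and> \<tau> 0 < \<tau> 2" | "\<tau> 1 < \<tau> 2 \<and> \<tau> 2 < \<tau> 0"
    | "\<tau> 2 < \<tau> 0 \<and> \<tau> 0 < \<tau> 1" | "\<tau> 2 < \<tau> 1 \<and> \<tau> 1 < \<tau> 0"
    by linarith
  then show thesis
    by cases (erule conjE, erule (1) that[rotated 3], simp_all)+
qed

locale T_search = monotone_search "T_edges l" "T_col l" ct 3 n ms ss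
  for l :: nat and ct :: "nat \<Rightarrow> nat" and n :: nat and ms :: "nat \<Rightarrow> vert move"
    and ss :: "nat \<Rightarrow> (nat \<Rightarrow> vert option) \<times> vert set set"
begin

lemma searcher_colors: "ct ` {..<3} = {1, 2, 3}" "inj_on ct {..<3}"
proof -
  have "{1, 2, 3} \<subseteq> ct ` {..<3}"
  proof -
    have tris: "(Q 1, Ch 1 0, 1) \<in> T_tri l" "(P1, V 0, 2) \<in> T_tri l" "(Q 1, P1, 3) \<in> T_tri l"
      by (auto simp: T_tri_def)
    show ?thesis
      using edge_color_carried[OF T_edge_of_tri] T_col_tri tris
      by (metis empty_subsetI image_eqI insert_subset lessThan_iff)
  qed
  moreover have "card (ct ` {..<3}) \<le> card {1, 2, 3 :: nat}"
    using card_image_le[of "{..<3}" ct] by simp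
  ultimately show colors: "ct ` {..<3} = {1, 2, 3}"
    using card_seteq[of "ct ` {..<3}" "{1, 2, 3}"] by (metis finite_imageI finite_lessThan)
  show "inj_on ct {..<3}"
    by (simp add: inj_on_iff_eq_card colors)
qed

lemma mixed_has_third_color:
  assumes guard: "doubly_guarded t v" and colors: "vcolors (T_edges l) (T_col l) v \<subseteq> {a, b}"
    and abc: "{a, b, c} = {1, 2, 3}" and u: "mixed t u" "u \<noteq> v"
  shows "c \<in> vcolors (T_edges l) (T_col l) u"
proof -
  obtain j1 j2 where j: "j1 \<noteq> j2" "pos t j1 = Some v" "pos t j2 = Some v" and t: "t \<le> n"
    using guard unfolding doubly_guarded_def by blast
  obtain ju where ju: "ju < 3" "pos t ju = Some u" using mixed_guarded[OF t u(1)] by blast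
  have j3: "j1 < 3" "j2 < 3" using j t pos_searcher_less by auto
  have "ju \<noteq> j1" "ju \<noteq> j2" using j ju u(2) by auto
  then have "ct ju \<noteq> ct j1" "ct ju \<noteq> ct j2" "ct j1 \<noteq> ct j2"
    using searcher_colors(2) j(1) j3 ju(1) by (auto dest: inj_onD)
  moreover have "ct j1 \<in> {a, b}" "ct j2 \<in> {a, b}" "ct ju \<in> {1, 2, 3}"
    using colors pos_color[OF t] j ju searcher_colors(1) by auto
  ultimately have "ct ju \<notin> {a, b}" "ct ju \<in> {a, b, c}" using abc by auto
  then have "ct ju = c" by blast
  then show ?thesis using pos_color[OF t ju(2)] by simp
qed

lemma spine_guard_third_color:
  assumes "doubly_guarded t (V x)" "1 \<le> x" "mixed t u" "u \<noteq> V x"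
  shows "(x + 1) mod 3 + 1 \<in> vcolors (T_edges l) (T_col l) u"
proof (rule mixed_has_third_color[OF assms(1) vcolors_V[OF assms(2)] _ assms(3,4)])
  obtain y where y: "x = Suc y" using assms(2) by (cases x) auto
  have "y mod 3 = 0 \<or> y mod 3 = 1 \<or> y mod 3 = 2" by arith
  then show "{x mod 3 + 1, (x - 1) mod 3 + 1, (x + 1) mod 3 + 1} = {1, 2, 3}"
    unfolding y by (elim disjE) (auto simp: mod_Suc)
qed

lemma spine_clean_iff:
  assumes "y \<le> z" "z \<le> l" "\<And>w. y < w \<Longrightarrow> w \<le> z \<Longrightarrow> \<not> mixed t (V w)"
  shows "spine_edge y \<in> clean t \<longleftrightarrow> spine_edge z \<in> clean t"
  using assms
proof (induction z rule: dec_induct)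
  case (step z)
  have "\<not> mixed t (V (Suc z))" using step by simp
  then have "spine_edge z \<in> clean t \<longleftrightarrow> spine_edge (Suc z) \<in> clean t"
    by (rule unmixed_clean_iff[OF _ spine_edges_members(1) spine_edges_members(1)])
      (use step.prems in \<open>auto simp: spine_edge_def\<close>)
  then show ?case using step by simp
qed simp

lemma doubly_guarded_spine: "1 \<le> x \<Longrightarrow> x \<le> l \<Longrightarrow> \<exists>t. doubly_guarded t (V x)"
  using spine_edges_members(1)[of "x - 1" l] spine_edges_members(1)[of x l]
    spine_edges_members(2)[of x l]
  by (intro doubly_guarded_at_junction[of "spine_edge (x - 1)" "spine_edge x" "{V x, PA x}"])
    (auto simp: spine_edge_def doubleton_eq_iff T_edges_simple)

lemma doubly_guarded_child: "i \<in> {1, 2} \<Longrightarrow> a < 3 \<Longrightarrow> \<exists>t. doubly_guarded t (Ch i a)"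
  using T_edges_members(1)[of i a l] T_edges_members(2)[of i a 0 l] T_edges_members(2)[of i a 1 l]
  by (intro doubly_guarded_at_junction[of "{Q i, Ch i a}" "{Ch i a, Gr i a 0}" "{Ch i a, Gr i a 1}"])
    (auto simp: T_edges_simple)

definition confined_to_branch :: "nat \<Rightarrow> nat \<Rightarrow> nat \<Rightarrow> bool" where
  "confined_to_branch t i a \<longleftrightarrow>
     t \<le> n \<and> mixed t (Ch i a) \<and> (\<forall>w. w \<noteq> Ch i a \<longrightarrow> w \<noteq> Q i \<longrightarrow> \<not> mixed t w)"

lemma middle_child_confined:
  assumes i: "i \<in> {1, 2}" and abc: "a < 3" "b < 3" "c < 3" "b \<noteq> a" "c \<noteq> a"
    and guards: "doubly_guarded tb (Ch i b)" "doubly_guarded ta (Ch i a)" "doubly_guarded tc (Ch i c)"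
    and order: "tb < ta" "ta < tc"
  shows "confined_to_branch ta i a"
proof (cases "mixed ta (Q i)")
  case True
  have "\<not> mixed ta w" if "w \<noteq> Ch i a" "w \<noteq> Q i" for w
    using mixed_unique_besides_doubly_guarded[of ta "Ch i a" w "Q i"] guards(2) True that by auto
  then show ?thesis
    using guards(2) unfolding confined_to_branch_def doubly_guarded_def by auto
next
  case False
  \<comment> \<open>then the clean region passes from child b across q_i to child c, which can never become
    mixed afterwards\<close>
  have other_child_unmixed: "\<not> mixed ta (Ch i d)" if "d \<noteq> a" for d
    using mixed_has_third_color[OF guards(2) vcolors_Ch, of 3 "Ch i d"] vcolors_Ch[of l i d] that
    by auto
  have times: "tb \<le> n" "ta \<le> n" "tc \<le> n" "mixed tb (Ch i b)" "mixed tc (Ch i c)"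
    using guards unfolding doubly_guarded_def by auto
  have edges: "{Q i, Ch i b} \<in> T_edges l" "{Q i, Ch i c} \<in> T_edges l"
    using T_edges_members(1)[OF i] abc by auto
  have "{Q i, Ch i b} \<in> clean ta"
    using mixed_before_iff_clean[OF times(1,2,4) other_child_unmixed edges(1)] abc order by auto
  then have "{Q i, Ch i c} \<in> clean ta"
    using unmixed_clean_iff[OF False edges] by simp
  moreover have "{Q i, Ch i c} \<notin> clean ta"
    using mixed_before_iff_clean[OF times(3,2,5) other_child_unmixed edges(2)] abc order by auto
  ultimately show ?thesis by contradiction
qed

lemma confined_phase_exists:
  assumes i: "i \<in> {1, 2}"
  shows "\<exists>a<3. \<exists>t. confined_to_branch t i a"
proof -
  define \<tau> where "\<tau> a = (SOME t. doubly_guarded t (Ch i a))" for a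
  have guard: "doubly_guarded (\<tau> a) (Ch i a)" if "a < 3" for a
    unfolding \<tau>_def using someI_ex[OF doubly_guarded_child[OF i that]] .
  have "inj_on \<tau> {..<3}"
  proof (rule inj_onI)
    fix x y assume "x \<in> {..<3}" "y \<in> {..<3}" "\<tau> x = \<tau> y"
    then have "Ch i x = Ch i y"
      using doubly_guarded_unique[OF order_refl guard[of x]] guard[of y] by simp
    then show "x = y" by simp
  qed
  then obtain a b c where "a < 3" "b < 3" "c < 3" "\<tau> b < \<tau> a" "\<tau> a < \<tau> c"
    by (rule middle_of_three)
  then show ?thesis using middle_child_confined[OF i] guard by (metis less_irrefl)
qed

lemma spine_clean_iff_branch_clean:
  assumes confined: "confined_to_branch t i a" and ij: "i \<in> {1, 2}" "j \<in> {1, 2}" "i \<noteq> j" "b < 3"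
    and g: "g \<in> T_edges l" "Ch j b \<in> g" and e: "e \<in> T_edges l" "V x \<in> e" "x \<le> l"
  shows "e \<in> clean t \<longleftrightarrow> g \<in> clean t"
proof -
  have unmixed: "\<not> mixed t w" if "w \<in> {Ch j b, Q j, link j} \<union> range V" for w
    using confined ij that unfolding confined_to_branch_def by auto
  have edges: "{Q j, Ch j b} \<in> T_edges l" "{Q j, link j} \<in> T_edges l" "{V 0, link j} \<in> T_edges l"
    using T_edges_members[OF ij(2)] ij(4) by auto
  have "g \<in> clean t \<longleftrightarrow> {Q j, Ch j b} \<in> clean t"
    by (rule unmixed_clean_iff[of t "Ch j b"]) (use unmixed g edges in auto)
  also have "\<dots> \<longleftrightarrow> {Q j, link j} \<in> clean t"
    by (rule unmixed_clean_iff[of t "Q j"]) (use unmixed edges in auto)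
  also have "\<dots> \<longleftrightarrow> {V 0, link j} \<in> clean t"
    by (rule unmixed_clean_iff[of t "link j"]) (use unmixed edges in auto)
  also have "\<dots> \<longleftrightarrow> spine_edge 0 \<in> clean t"
    by (rule unmixed_clean_iff[of t "V 0", OF _ _ spine_edges_members(1)])
      (use unmixed edges in \<open>auto simp: spine_edge_def\<close>)
  also have "\<dots> \<longleftrightarrow> spine_edge x \<in> clean t"
    by (rule spine_clean_iff) (use unmixed e(3) in auto)
  also have "\<dots> \<longleftrightarrow> e \<in> clean t"
    by (rule unmixed_clean_iff[of t "V x", OF _ spine_edges_members(1)])
      (use unmixed e in \<open>auto simp: spine_edge_def\<close>)
  finally show ?thesis by simp
qed

lemma route_mixed:
  assumes ij: "i \<in> {1, 2}" "j \<in> {1, 2}" "a < 3" "b < 3"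
    and g1: "g1 \<in> clean t" "Ch i a \<in> g1"
    and g2: "g2 \<in> T_edges l" "g2 \<notin> clean t" "Ch j b \<in> g2"
  shows "\<exists>w\<in>{Ch i a, Q i, link i, V 0, link j, Q j, Ch j b}. mixed t w"
proof (rule ccontr)
  assume "\<not> ?thesis"
  then have unmixed: "\<not> mixed t w" if "w \<in> {Ch i a, Q i, link i, V 0, link j, Q j, Ch j b}" for w
    using that by blast
  note edges = T_edges_members[OF ij(1)] T_edges_members[OF ij(2)]
  have "{Q i, Ch i a} \<in> clean t"
    by (rule clean_spreads[OF g1(1), of "Ch i a"]) (use unmixed edges ij g1 in auto)
  then have "{Q i, link i} \<in> clean t"
    by (rule clean_spreads[of _ _ "Q i"]) (use unmixed edges in auto)
  then have "{V 0, link i} \<in> clean t"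
    by (rule clean_spreads[of _ _ "link i"]) (use unmixed edges in auto)
  then have "{V 0, link j} \<in> clean t"
    by (rule clean_spreads[of _ _ "V 0"]) (use unmixed edges in auto)
  then have "{Q j, link j} \<in> clean t"
    by (rule clean_spreads[of _ _ "link j"]) (use unmixed edges in auto)
  then have "{Q j, Ch j b} \<in> clean t"
    by (rule clean_spreads[of _ _ "Q j"]) (use unmixed edges ij in auto)
  then have "g2 \<in> clean t"
    by (rule clean_spreads[of _ _ "Ch j b"]) (use unmixed g2 in auto)
  then show False using g2(2) by contradiction
qed

lemma spine_guard_between:
  assumes ci: "confined_to_branch ti i a" and cj: "confined_to_branch tj j b"
    and ij: "i \<in> {1, 2}" "j \<in> {1, 2}" "i \<noteq> j" "a < 3" "b < 3" and order: "ti < tj"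
    and guard: "doubly_guarded t (V x)" and x: "x \<le> l"
  shows "ti < t \<and> t < tj"
proof -
  have times: "ti \<le> n" "tj \<le> n" "t \<le> n"
    using ci cj guard unfolding confined_to_branch_def doubly_guarded_def by auto
  obtain g1 where g1: "g1 \<in> clean ti" "Ch i a \<in> g1"
    using ci unfolding confined_to_branch_def mixed_def by blast
  obtain g2 where g2: "g2 \<in> T_edges l" "g2 \<notin> clean tj" "Ch j b \<in> g2"
    using cj unfolding confined_to_branch_def mixed_def by blast
  obtain e f where e: "e \<in> clean t" "V x \<in> e" and f: "f \<in> T_edges l" "f \<notin> clean t" "V x \<in> f"
    using guard unfolding doubly_guarded_def mixed_def by blast
  have "g2 \<notin> clean ti" using g2(2) clean_mono[of ti tj] order times by auto
  moreover have "e \<in> T_edges l" using e(1) clean_subset times(3) by blast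
  ultimately have "e \<notin> clean ti"
    using spine_clean_iff_branch_clean[OF ci ij(1-3,5) g2(1,3) _ e(2) x] by blast
  then have "ti < t" using e(1) clean_mono[of t ti] times(1) by (meson not_less subsetD)
  have "g1 \<in> T_edges l" "g1 \<in> clean tj"
    using g1 clean_subset clean_mono[of ti tj] order times by auto
  then have "f \<in> clean tj"
    using spine_clean_iff_branch_clean[OF cj ij(2,1) ij(3)[symmetric] ij(4) _ g1(2) f(1,3) x] by blast
  then have "t < tj" using f(2) clean_mono[of tj t] times(3) by (meson not_less subsetD)
  with \<open>ti < t\<close> show ?thesis ..
qed

lemma spine_guard_isolated:
  assumes ij: "i \<in> {1, 2}" "j \<in> {1, 2}" "a < 3" "b < 3"
    and g1: "g1 \<in> clean t" "Ch i a \<in> g1"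
    and g2: "g2 \<in> T_edges l" "g2 \<notin> clean t" "Ch j b \<in> g2"
    and guard: "doubly_guarded t (V x)" "1 \<le> x" and y: "1 \<le> y" "y \<noteq> x"
  shows "\<not> mixed t (V y)"
proof
  assume mixed_y: "mixed t (V y)"
  obtain w where w: "w \<in> {Ch i a, Q i, link i, V 0, link j, Q j, Ch j b}" "mixed t w"
    using route_mixed[OF ij g1 g2] by blast
  have "V y = w"
    by (rule mixed_unique_besides_doubly_guarded[OF order_refl guard(1) mixed_y w(2)])
      (use w guard y in auto)
  then show False using w(1) y(1) by auto
qed

lemma mixed_before_iff_spine_start_clean:
  assumes "s \<le> n" "t \<le> n" "mixed s (V y)" "1 \<le> y" "y \<le> l"
    and unmixed: "\<And>w. 1 \<le> w \<Longrightarrow> w \<le> y \<Longrightarrow> \<not> mixed t (V w)"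
  shows "s < t \<longleftrightarrow> spine_edge 0 \<in> clean t"
proof -
  have "s < t \<longleftrightarrow> spine_edge y \<in> clean t"
    using mixed_before_iff_clean[OF assms(1-3) unmixed[OF assms(4) order_refl]
        spine_edges_members(1)[OF assms(5)]]
    by (simp add: spine_edge_def)
  also have "\<dots> \<longleftrightarrow> spine_edge 0 \<in> clean t"
    using spine_clean_iff[of 0 y t] unmixed assms(5) by auto
  finally show ?thesis .
qed

lemma mixed_before_iff_spine_end_clean:
  assumes "s \<le> n" "t \<le> n" "mixed s (V y)" "1 \<le> y" "y \<le> z" "z \<le> l"
    and unmixed: "\<And>w. y \<le> w \<Longrightarrow> w \<le> z \<Longrightarrow> \<not> mixed t (V w)"
  shows "s < t \<longleftrightarrow> spine_edge z \<in> clean t"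
proof -
  have "s < t \<longleftrightarrow> spine_edge (y - 1) \<in> clean t"
    using mixed_before_iff_clean[OF assms(1-3) unmixed[OF order_refl assms(5)]
        spine_edges_members(1)[of "y - 1" l]] assms(4-6)
    by (simp add: spine_edge_def)
  also have "\<dots> \<longleftrightarrow> spine_edge z \<in> clean t"
    using spine_clean_iff[of "y - 1" z t] unmixed assms(4-6) by auto
  finally show ?thesis .
qed

text \<open>Whether v_y is doubly guarded before v_x can be read off the spine at time \<tau> x on the
side of v_x where v_y lies; the relative order of \<tau> 1 and \<tau> 7 then fixes the direction of the
whole sweep.\<close>
lemma spine_sweep_order:
  assumes l: "7 \<le> l"
    and mixed: "\<And>x. 1 \<le> x \<Longrightarrow> x \<le> 7 \<Longrightarrow> \<tau> x \<le> n \<and> mixed (\<tau> x) (V x)"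
    and unmixed: "\<And>x y. 1 \<le> x \<Longrightarrow> x \<le> 7 \<Longrightarrow> 1 \<le> y \<Longrightarrow> y \<noteq> x \<Longrightarrow> \<not> mixed (\<tau> x) (V y)"
  shows "(\<tau> 4 < \<tau> 5 \<and> \<tau> 5 < \<tau> 6 \<and> \<tau> 6 < \<tau> 7 \<and> spine_edge 0 \<in> clean (\<tau> 4)) \<or>
         (\<tau> 7 < \<tau> 6 \<and> \<tau> 6 < \<tau> 5 \<and> \<tau> 5 < \<tau> 4 \<and> spine_edge 0 \<notin> clean (\<tau> 4))"
proof -
  have left: "\<tau> y < \<tau> x \<longleftrightarrow> spine_edge 0 \<in> clean (\<tau> x)" if "1 \<le> y" "y < x" "x \<le> 7" for x y
    by (rule mixed_before_iff_spine_start_clean[of _ _ y]) (use mixed unmixed that l in auto)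
  have right: "\<tau> y < \<tau> x \<longleftrightarrow> spine_edge 7 \<in> clean (\<tau> x)" if "1 \<le> x" "x < y" "y \<le> 7" for x y
    by (rule mixed_before_iff_spine_end_clean[of _ _ y]) (use mixed unmixed that l in auto)
  have distinct: "\<tau> x \<noteq> \<tau> y" if "1 \<le> x" "x \<le> 7" "1 \<le> y" "y \<le> 7" "x \<noteq> y" for x y
    using mixed[of y] unmixed[of x y] that by auto
  consider "\<tau> 1 < \<tau> 7" | "\<tau> 7 < \<tau> 1" using distinct[of 1 7] by linarith
  then show ?thesis
  proof cases
    case 1
    have "\<tau> 1 < \<tau> x" if "2 \<le> x" "x \<le> 7" for x
      using right[of 1 x] right[of 1 7] 1 distinct[of 1 x] that by auto
    then have "\<tau> y < \<tau> x" if "1 \<le> y" "y < x" "x \<le> 7" for x y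
      using left[of y x] left[of 1 x] that by auto
    then show ?thesis using left[of 1 4] by auto
  next
    case 2
    have "\<tau> 7 < \<tau> y" if "1 \<le> y" "y \<le> 6" for y
      using left[of y 7] left[of 1 7] 2 distinct[of y 7] that by auto
    then have "\<tau> y < \<tau> x" if "1 \<le> x" "x < y" "y \<le> 7" for x y
      using right[of x y] right[of x 7] that by auto
    then have "\<tau> 7 < \<tau> 6" "\<tau> 6 < \<tau> 5" "\<tau> 5 < \<tau> 4" "\<tau> 4 < \<tau> 1" by auto
    then show ?thesis using left[of 1 4] by auto
  qed
qed

lemma outward_sweep_impossible:
  assumes j: "j \<in> {1, 2}" "b < 3" and g: "g \<in> T_edges l" "g \<notin> clean t7" "Ch j b \<in> g"
    and guards: "doubly_guarded t4 (V 4)" "doubly_guarded t5 (V 5)" "doubly_guarded t6 (V 6)"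
      "doubly_guarded t7 (V 7)"
    and order: "t4 < t5" "t5 < t6" "t6 < t7" and start: "spine_edge 0 \<in> clean t4"
  shows False
proof -
  have times: "t5 \<le> n" "t6 \<le> n" "t7 \<le> n" using guards unfolding doubly_guarded_def by auto
  have unmixed: "\<not> mixed t4 (V 0)" "\<not> mixed t5 (link j)" "\<not> mixed t6 (Q j)" "\<not> mixed t7 (Ch j b)"
    using spine_guard_third_color[OF guards(1), of "V 0"] spine_guard_third_color[OF guards(2), of "link j"]
      spine_guard_third_color[OF guards(3), of "Q j"] spine_guard_third_color[OF guards(4), of "Ch j b"]
      vcolors_V0[of l] vcolors_link[of l j] vcolors_Q[of l j] vcolors_Ch[of l j b]
    by auto
  note edges = T_edges_members[OF j(1)]
  have "{V 0, link j} \<in> clean t4"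
    by (rule clean_spreads[OF start unmixed(1)]) (use edges in \<open>auto simp: spine_edge_def\<close>)
  then have "{Q j, link j} \<in> clean t5"
    by (rule clean_spreads_later[of _ _ _ "link j"]) (use order times unmixed edges in auto)
  then have "{Q j, Ch j b} \<in> clean t6"
    by (rule clean_spreads_later[of _ _ _ "Q j"]) (use order times unmixed edges j in auto)
  then have "g \<in> clean t7"
    by (rule clean_spreads_later[of _ _ _ "Ch j b"]) (use order times unmixed g in auto)
  then show False using g(2) by contradiction
qed

lemma inward_sweep_impossible:
  assumes i: "i \<in> {1, 2}" "a < 3" and g: "g \<in> clean t7" "Ch i a \<in> g"
    and guards: "doubly_guarded t4 (V 4)" "doubly_guarded t5 (V 5)" "doubly_guarded t6 (V 6)"
      "doubly_guarded t7 (V 7)"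
    and order: "t7 < t6" "t6 < t5" "t5 < t4" and finish: "spine_edge 0 \<notin> clean t4"
  shows False
proof -
  have times: "t4 \<le> n" "t5 \<le> n" "t6 \<le> n" using guards unfolding doubly_guarded_def by auto
  have unmixed: "\<not> mixed t7 (Ch i a)" "\<not> mixed t6 (Q i)" "\<not> mixed t5 (link i)" "\<not> mixed t4 (V 0)"
    using spine_guard_third_color[OF guards(4), of "Ch i a"] spine_guard_third_color[OF guards(3), of "Q i"]
      spine_guard_third_color[OF guards(2), of "link i"] spine_guard_third_color[OF guards(1), of "V 0"]
      vcolors_Ch[of l i a] vcolors_Q[of l i] vcolors_link[of l i] vcolors_V0[of l]
    by auto
  note edges = T_edges_members[OF i(1)]
  have "{Q i, Ch i a} \<in> clean t7"
    by (rule clean_spreads[OF g(1) unmixed(1)]) (use edges i g in auto)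
  then have "{Q i, link i} \<in> clean t6"
    by (rule clean_spreads_later[of _ _ _ "Q i"]) (use order times unmixed edges in auto)
  then have "{V 0, link i} \<in> clean t5"
    by (rule clean_spreads_later[of _ _ _ "link i"]) (use order times unmixed edges in auto)
  then have "spine_edge 0 \<in> clean t4"
    by (rule clean_spreads_later[of _ _ _ "V 0"])
      (use order times unmixed spine_edges_members(1)[of 0 l] in \<open>auto simp: spine_edge_def\<close>)
  then show False using finish by contradiction
qed

lemma confined_phases_conflict:
  assumes l: "7 \<le> l" and ci: "confined_to_branch ti i a" and cj: "confined_to_branch tj j b"
    and ij: "i \<in> {1, 2}" "j \<in> {1, 2}" "i \<noteq> j" "a < 3" "b < 3" and order: "ti < tj"
  shows False
proof -
  obtain g1 where g1: "g1 \<in> clean ti" "Ch i a \<in> g1"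
    using ci unfolding confined_to_branch_def mixed_def by blast
  obtain g2 where g2: "g2 \<in> T_edges l" "g2 \<notin> clean tj" "Ch j b \<in> g2"
    using cj unfolding confined_to_branch_def mixed_def by blast
  define \<tau> where "\<tau> x = (SOME t. doubly_guarded t (V x))" for x
  have guard: "doubly_guarded (\<tau> x) (V x)" if "1 \<le> x" "x \<le> 7" for x
    unfolding \<tau>_def using someI_ex[OF doubly_guarded_spine] that l by auto
  have between: "ti < \<tau> x \<and> \<tau> x < tj" if "1 \<le> x" "x \<le> 7" for x
    using spine_guard_between[OF ci cj ij order guard[OF that]] that l by auto
  have g1_clean: "g1 \<in> clean (\<tau> x)" and g2_dirty: "g2 \<notin> clean (\<tau> x)"
    if "1 \<le> x" "x \<le> 7" for x
    using between[OF that] g1 g2 guard[OF that] cj clean_mono[of ti "\<tau> x"] clean_mono[of "\<tau> x" tj]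
    unfolding doubly_guarded_def confined_to_branch_def by auto
  have "\<not> mixed (\<tau> x) (V y)" if "1 \<le> x" "x \<le> 7" "1 \<le> y" "y \<noteq> x" for x y
    using spine_guard_isolated[OF ij(1,2,4,5) g1_clean g1(2) g2(1) g2_dirty g2(3) guard] that
    by blast
  then consider
      "\<tau> 4 < \<tau> 5" "\<tau> 5 < \<tau> 6" "\<tau> 6 < \<tau> 7" "spine_edge 0 \<in> clean (\<tau> 4)"
    | "\<tau> 7 < \<tau> 6" "\<tau> 6 < \<tau> 5" "\<tau> 5 < \<tau> 4" "spine_edge 0 \<notin> clean (\<tau> 4)"
    using spine_sweep_order[OF l, of \<tau>] guard unfolding doubly_guarded_def by blast
  then show False
  proof cases
    case 1
    then show False
      using outward_sweep_impossible[OF ij(2,5) g2(1) g2_dirty[of 7] g2(3)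
          guard[of 4] guard[of 5] guard[of 6] guard[of 7]]
      by simp
  next
    case 2
    then show False
      using inward_sweep_impossible[OF ij(1,4) g1_clean[of 7] g1(2)
          guard[of 4] guard[of 5] guard[of 6] guard[of 7]]
      by simp
  qed
qed

end

theorem lemma3p5:
  fixes l :: nat
  assumes "l \<ge> 7"
  shows "\<not> (\<exists>(ct :: nat \<Rightarrow> nat) n (ms :: nat \<Rightarrow> vert move) ss.
              monotone_search_strategy (T_edges l) (T_col l) ct 3 n ms ss)"
proof
  assume "\<exists>(ct :: nat \<Rightarrow> nat) n (ms :: nat \<Rightarrow> vert move) ss.
              monotone_search_strategy (T_edges l) (T_col l) ct 3 n ms ss"
  then obtain ct n ms ss where "monotone_search_strategy (T_edges l) (T_col l) ct 3 n ms ss"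
    by blast
  then interpret T_search l ct n ms ss by unfold_locales
  obtain a1 t1 a2 t2 where "a1 < 3" "confined_to_branch t1 1 a1" "a2 < 3" "confined_to_branch t2 2 a2"
    using confined_phase_exists[of 1] confined_phase_exists[of 2] by auto
  moreover have "t1 \<noteq> t2" using calculation unfolding confined_to_branch_def by auto
  ultimately show False
    using confined_phases_conflict[OF assms, of t1 1 a1 t2 2 a2]
      confined_phases_conflict[OF assms, of t2 2 a2 t1 1 a1] by (auto simp: linorder_neq_iff)
qed

end
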